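(* Let $K$ be a characteristic kernel on $\mathcal S=\{1,\ldots,M\}$ ($M\ge2$), let $\pi_1,\dots,\pi_M\in(0,1)$ with $\sum_i\pi_i=1$, and let $P_1,\ldots,P_M$ be probability measures on a measurable space $\mathcal{Z}$. Then the KMD $\eta=\eta(P_1,\ldots,P_M)$ satisfies: (i) $\eta\in[0,1]$; (ii) $\eta=0$ if and only if $P_1=\cdots=P_M$; (iii) $\eta=1$ if and only if $P_1,\ldots,P_M$ are mutually singular, i.e. there exist pairwise disjoint measurable sets $A_1,\ldots,A_M$ with $P_i(A_i)=1$ for $i=1,\ldots,M$.
   Context: A kernel on $\mathcal S=\{1,\ldots,M\}$ is a symmetric function $K:\mathcal S\times\mathcal S\to\mathbb R$ such that the matrix $[K(i,j)]_{i,j=1}^M$ is positive semidefinite; it is characteristic if $\sum_{i,j=1}^M\alpha_i\alpha_jK(i,j)>0$ for every nonzero $(\alpha_1,\ldots,\alpha_M)\in\mathbb R^M$ with $\sum_i\alpha_i=0$. Given $P_1,\dots,P_M$ and $\pi$, let $(\tilde Z,\tilde\Delta)$ be a random pair with $\mathbb P(\tilde\Delta=i)=\pi_i$ and conditional law of $\tilde Z$ given $\tilde\Delta=i$ equal to $P_i$; let $(\tilde Z_1,\tilde\Delta_1),(\tilde Z_2,\tilde\Delta_2)$ be i.i.d. copies of $(\tilde Z,\tilde\Delta)$; and let $\tilde\Delta'$ be a random variable such that $(\tilde Z,\tilde\Delta')$ has the same law as $(\tilde Z,\tilde\Delta)$ and $\tilde\Delta,\tilde\Delta'$ are conditionally independent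 given $\tilde Z$. The kernel measure of multi-sample dissimilarity (KMD) is $$\eta(P_1,\ldots,P_M)=\frac{\mathbb E[K(\tilde\Delta,\tilde\Delta')]-\mathbb E[K(\tilde\Delta_1,\tilde\Delta_2)]}{\mathbb E[K(\tilde\Delta,\tilde\Delta)]-\mathbb E[K(\tilde\Delta_1,\tilde\Delta_2)]}.$$ *)

theory Defs
  imports "HOL-Probability.Probability"
begin

definition is_kernel :: "nat \<Rightarrow> (nat \<Rightarrow> nat \<Rightarrow> real) \<Rightarrow> bool" where
  "is_kernel M K \<longleftrightarrow>
     (\<forall>i\<in>{1..M}. \<forall>j\<in>{1..M}. K i j = K j i) \<and>
     (\<forall>\<alpha> :: nat \<Rightarrow> real. (\<Sum>i=1..M. \<Sum>j=1..M. \<alpha> i * \<alpha> j * K i j) \<ge> 0)"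

definition characteristic_kernel :: "nat \<Rightarrow> (nat \<Rightarrow> nat \<Rightarrow> real) \<Rightarrow> bool" where
  "characteristic_kernel M K \<longleftrightarrow> is_kernel M K \<and>
     (\<forall>\<alpha> :: nat \<Rightarrow> real. (\<exists>i\<in>{1..M}. \<alpha> i \<noteq> 0) \<and> (\<Sum>i=1..M. \<alpha> i) = 0 \<longrightarrow>
        (\<Sum>i=1..M. \<Sum>j=1..M. \<alpha> i * \<alpha> j * K i j) > 0)"

text \<open>Law of \<open>Z~\<close>: the mixture \<open>\<Sum>i \<pi>_i P_i\<close> on the measurable space Z.\<close>

definition mixture :: "nat \<Rightarrow> (nat \<Rightarrow> real) \<Rightarrow> (nat \<Rightarrow> 'a measure) \<Rightarrow> 'a measure \<Rightarrow> 'a measure" where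
  "mixture M \<pi> P Z = measure_of (space Z) (sets Z)
      (\<lambda>A. \<Sum>i=1..M. ennreal (\<pi> i) * emeasure (P i) A)"

text \<open>Conditional probability \<open>P(\<Delta>~ = i | Z~ = z) = \<pi>_i dP_i/d\<mu> (z)\<close>, \<open>\<mu>\<close> the law of \<open>Z~\<close>.\<close>

definition cond_label_prob :: "nat \<Rightarrow> (nat \<Rightarrow> real) \<Rightarrow> (nat \<Rightarrow> 'a measure) \<Rightarrow> 'a measure \<Rightarrow> nat \<Rightarrow> 'a \<Rightarrow> real" where
  "cond_label_prob M \<pi> P Z i z = \<pi> i * enn2real (RN_deriv (mixture M \<pi> P Z) (P i) z)"

text \<open>E[K(\<Delta>~,\<Delta>~')] with \<Delta>~,\<Delta>~' conditionally independent given Z~.\<close>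

definition E_K_cond :: "(nat \<Rightarrow> nat \<Rightarrow> real) \<Rightarrow> nat \<Rightarrow> (nat \<Rightarrow> real) \<Rightarrow> (nat \<Rightarrow> 'a measure) \<Rightarrow> 'a measure \<Rightarrow> real" where
  "E_K_cond K M \<pi> P Z = (\<integral>z. (\<Sum>i=1..M. \<Sum>j=1..M.
       K i j * cond_label_prob M \<pi> P Z i z * cond_label_prob M \<pi> P Z j z) \<partial>(mixture M \<pi> P Z))"

text \<open>E[K(\<Delta>~_1,\<Delta>~_2)] for independent copies.\<close>
definition E_K_indep :: "(nat \<Rightarrow> nat \<Rightarrow> real) \<Rightarrow> nat \<Rightarrow> (nat \<Rightarrow> real) \<Rightarrow> real" where
  "E_K_indep K M \<pi> = (\<Sum>i=1..M. \<Sum>j=1..M. \<pi> i * \<pi> j * K i j)"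

definition E_K_diag :: "(nat \<Rightarrow> nat \<Rightarrow> real) \<Rightarrow> nat \<Rightarrow> (nat \<Rightarrow> real) \<Rightarrow> real" where
  "E_K_diag K M \<pi> = (\<Sum>i=1..M. \<pi> i * K i i)"

definition KMD :: "(nat \<Rightarrow> nat \<Rightarrow> real) \<Rightarrow> nat \<Rightarrow> (nat \<Rightarrow> real) \<Rightarrow> (nat \<Rightarrow> 'a measure) \<Rightarrow> 'a measure \<Rightarrow> real" where
  "KMD K M \<pi> P Z = (E_K_cond K M \<pi> P Z - E_K_indep K M \<pi>) / (E_K_diag K M \<pi> - E_K_indep K M \<pi>)"

end

theory Submission
  imports Defs
begin

text \<open>
  Write \<open>q\<^sub>i(z) = \<pi>\<^sub>i dP\<^sub>i/d\<mu> (z)\<close> (\<open>cond_label_prob\<close>) for the conditional probability of the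
  label \<open>i\<close> given \<open>z\<close>, where \<open>\<mu> = \<Sum>\<^sub>i \<pi>\<^sub>i P\<^sub>i\<close>, and \<open>Q(a) = \<Sum>\<^sub>i\<^sub>j a\<^sub>i a\<^sub>j K(i,j)\<close>
  (\<open>kernel_quad\<close>), the squared norm of
  \<open>\<Sum>\<^sub>i a\<^sub>i \<phi>(i)\<close> for a feature map \<open>\<phi>\<close> of \<open>K\<close>. Since \<open>q(z)\<close> is a probability vector with mean
  \<open>\<pi>\<close>, the numerator of \<open>\<eta>\<close> is \<open>E Q(q - \<pi>)\<close>, the gap between denominator and numerator is
  \<open>E V(q)\<close>, and the denominator is \<open>V(\<pi>) > 0\<close>, where \<open>V(a) = \<Sum>\<^sub>k a\<^sub>k Q(e\<^sub>k - a)\<close>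
  (\<open>kernel_variance\<close>) is the variance of \<open>\<phi>\<close> under the distribution \<open>a\<close>. Both integrands are nonnegative, so
  \<open>0 \<le> \<eta> \<le> 1\<close>. A characteristic kernel makes \<open>Q\<close> definite on vectors summing to \<open>0\<close>, so
  \<open>\<eta> = 0\<close> forces \<open>q = \<pi>\<close> a.e., i.e. every \<open>P\<^sub>i\<close> equals \<open>\<mu>\<close>; and \<open>V\<close> vanishes exactly at
  the unit vectors, so \<open>\<eta> = 1\<close> forces \<open>q(z) \<in> {e\<^sub>1, \<dots>, e\<^sub>M}\<close> a.e., and the sets
  \<open>{q = e\<^sub>i}\<close> witness the mutual singularity.
\<close>

definition kernel_form :: "(nat \<Rightarrow> nat \<Rightarrow> real) \<Rightarrow> nat set \<Rightarrow> (nat \<Rightarrow> real) \<Rightarrow> (nat \<Rightarrow> real) \<Rightarrow> real"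
  where "kernel_form K S a b = (\<Sum>i\<in>S. \<Sum>j\<in>S. a i * b j * K i j)"

abbreviation kernel_quad :: "(nat \<Rightarrow> nat \<Rightarrow> real) \<Rightarrow> nat set \<Rightarrow> (nat \<Rightarrow> real) \<Rightarrow> real"
  where "kernel_quad K S a \<equiv> kernel_form K S a a"

lemma kernel_form_sum_left: "kernel_form K S a b = (\<Sum>i\<in>S. a i * (\<Sum>j\<in>S. b j * K i j))"
  unfolding kernel_form_def by (simp add: sum_distrib_left ac_simps)

lemma kernel_form_sum_right: "kernel_form K S a b = (\<Sum>j\<in>S. b j * (\<Sum>i\<in>S. a i * K i j))"
  unfolding kernel_form_def by (subst sum.swap) (simp add: sum_distrib_left ac_simps)

lemma kernel_form_diff_left:
  "kernel_form K S (\<lambda>i. a i - a' i) b = kernel_form K S a b - kernel_form K S a' b"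
  unfolding kernel_form_def by (simp add: left_diff_distrib sum_subtractf)

lemma kernel_form_diff_right:
  "kernel_form K S a (\<lambda>j. b j - b' j) = kernel_form K S a b - kernel_form K S a b'"
  unfolding kernel_form_def by (simp add: right_diff_distrib left_diff_distrib sum_subtractf)

lemma borel_measurable_kernel_form [measurable]:
  assumes [measurable]: "\<And>i. (\<lambda>z. a i z) \<in> borel_measurable N" "\<And>j. (\<lambda>z. b j z) \<in> borel_measurable N"
  shows "(\<lambda>z. kernel_form K S (\<lambda>i. a i z) (\<lambda>j. b j z)) \<in> borel_measurable N"
  unfolding kernel_form_def by measurable

lemma kernel_form_zero_left: "\<forall>i\<in>S. a i = 0 \<Longrightarrow> kernel_form K S a b = 0"
  unfolding kernel_form_def by simp

lemma kernel_form_unit_left: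
  "finite S \<Longrightarrow> k \<in> S \<Longrightarrow> kernel_form K S (\<lambda>i. of_bool (i = k)) b = (\<Sum>j\<in>S. b j * K k j)"
  unfolding kernel_form_sum_left by (simp add: if_distrib sum.delta')

lemma kernel_form_unit_right:
  "finite S \<Longrightarrow> k \<in> S \<Longrightarrow> kernel_form K S a (\<lambda>j. of_bool (j = k)) = (\<Sum>i\<in>S. a i * K i k)"
  unfolding kernel_form_sum_right by (simp add: if_distrib sum.delta')

lemma kernel_quad_unit_diff:
  assumes "finite S" "k \<in> S"
  shows "kernel_quad K S (\<lambda>i. of_bool (i = k) - a i)
    = K k k - (\<Sum>j\<in>S. a j * K k j) - (\<Sum>i\<in>S. a i * K i k) + kernel_quad K S a"
  using assms
  by (simp add: kernel_form_diff_left kernel_form_diff_right kernel_form_unit_left kernel_form_unit_right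
      kernel_form_unit_left[where b = "\<lambda>j. of_bool (j = k)"])

definition kernel_variance :: "(nat \<Rightarrow> nat \<Rightarrow> real) \<Rightarrow> nat set \<Rightarrow> (nat \<Rightarrow> real) \<Rightarrow> real"
  where "kernel_variance K S a = (\<Sum>k\<in>S. a k * kernel_quad K S (\<lambda>i. of_bool (i = k) - a i))"

lemma borel_measurable_kernel_variance [measurable]:
  assumes [measurable]: "\<And>i. (\<lambda>z. a i z) \<in> borel_measurable N"
  shows "(\<lambda>z. kernel_variance K S (\<lambda>i. a i z)) \<in> borel_measurable N"
  unfolding kernel_variance_def by measurable

lemma kernel_variance_eq:
  assumes "finite S" and "sum a S = 1"
  shows "kernel_variance K S a = (\<Sum>k\<in>S. a k * K k k) - kernel_quad K S a"
proof -
  have "kernel_variance K S a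
      = (\<Sum>k\<in>S. a k * K k k) - (\<Sum>k\<in>S. a k * (\<Sum>j\<in>S. a j * K k j))
        - (\<Sum>k\<in>S. a k * (\<Sum>i\<in>S. a i * K i k)) + sum a S * kernel_quad K S a"
    using assms(1) unfolding kernel_variance_def
    by (simp add: kernel_quad_unit_diff algebra_simps sum.distrib sum_subtractf sum_distrib_right)
  also have "\<dots> = (\<Sum>k\<in>S. a k * K k k) - kernel_quad K S a"
    using assms(2) kernel_form_sum_left[of K S a a] kernel_form_sum_right[of K S a a] by simp
  finally show ?thesis .
qed

lemma characteristic_kernel_is_kernel: "characteristic_kernel M K \<Longrightarrow> is_kernel M K"
  unfolding characteristic_kernel_def by blast

lemma kernel_quad_nonneg: "is_kernel M K \<Longrightarrow> 0 \<le> kernel_quad K {1..M} a"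
  unfolding is_kernel_def kernel_form_def by blast

lemma kernel_variance_nonneg:
  "is_kernel M K \<Longrightarrow> \<forall>i\<in>{1..M}. 0 \<le> a i \<Longrightarrow> 0 \<le> kernel_variance K {1..M} a"
  unfolding kernel_variance_def using kernel_quad_nonneg[of M K]
  by (auto intro!: sum_nonneg mult_nonneg_nonneg)

lemma characteristic_kernel_quad_pos:
  assumes "characteristic_kernel M K" and "(\<Sum>i=1..M. a i) = 0" and "i \<in> {1..M}" "a i \<noteq> 0"
  shows "0 < kernel_quad K {1..M} a"
  using assms unfolding characteristic_kernel_def kernel_form_def by blast

lemma characteristic_kernel_quad_eq_0_iff:
  assumes "characteristic_kernel M K" and "(\<Sum>i=1..M. a i) = 0"
  shows "kernel_quad K {1..M} a = 0 \<longleftrightarrow> (\<forall>i\<in>{1..M}. a i = 0)"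
  using characteristic_kernel_quad_pos[OF assms] kernel_form_zero_left[of "{1..M}" a K a] by force

lemma characteristic_kernel_variance_eq_0_iff:
  assumes K: "characteristic_kernel M K"
    and a: "\<forall>i\<in>{1..M}. 0 \<le> a i" "(\<Sum>i=1..M. a i) = 1"
  shows "kernel_variance K {1..M} a = 0 \<longleftrightarrow> (\<exists>k\<in>{1..M}. \<forall>i\<in>{1..M}. a i = of_bool (i = k))"
proof
  let ?Q = "\<lambda>k. kernel_quad K {1..M} (\<lambda>i. of_bool (i = k) - a i)"
  have Q_nonneg: "0 \<le> ?Q k" for k
    by (rule kernel_quad_nonneg[OF characteristic_kernel_is_kernel[OF K]])
  have sum_diff: "(\<Sum>i=1..M. of_bool (i = k) - a i) = 0" if "k \<in> {1..M}" for k
    using that a(2) by (simp add: sum_subtractf)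
  assume "kernel_variance K {1..M} a = 0"
  then have "\<forall>k\<in>{1..M}. a k * ?Q k = 0"
    unfolding kernel_variance_def using a(1) Q_nonneg by (subst (asm) sum_nonneg_eq_0_iff) auto
  moreover obtain k where k: "k \<in> {1..M}" "a k \<noteq> 0"
    using a(2) by (metis sum.neutral zero_neq_one)
  ultimately have "a k * ?Q k = 0" by blast
  with k(2) have "?Q k = 0" by simp
  then have "\<forall>i\<in>{1..M}. of_bool (i = k) - a i = 0"
    using characteristic_kernel_quad_eq_0_iff[OF K sum_diff[OF k(1)]] by blast
  then have "\<forall>i\<in>{1..M}. a i = of_bool (i = k)" by simp
  with k(1) show "\<exists>k\<in>{1..M}. \<forall>i\<in>{1..M}. a i = of_bool (i = k)" by blast
next
  assume "\<exists>k\<in>{1..M}. \<forall>i\<in>{1..M}. a i = of_bool (i = k)"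
  then obtain k where "k \<in> {1..M}" "\<forall>i\<in>{1..M}. a i = of_bool (i = k)" by blast
  then have "a k' * kernel_quad K {1..M} (\<lambda>i. of_bool (i = k') - a i) = 0" if "k' \<in> {1..M}" for k'
    using that by (cases "k' = k") (auto intro: kernel_form_zero_left)
  then show "kernel_variance K {1..M} a = 0"
    unfolding kernel_variance_def by (intro sum.neutral) blast
qed

lemma E_K_indep_eq_kernel_quad: "E_K_indep K M \<pi> = kernel_quad K {1..M} \<pi>"
  unfolding E_K_indep_def kernel_form_def ..

lemma E_K_diag_minus_indep_pos:
  assumes K: "characteristic_kernel M K"
    and \<pi>: "\<forall>i\<in>{1..M}. 0 < \<pi> i \<and> \<pi> i < 1" "(\<Sum>i=1..M. \<pi> i) = 1"
  shows "0 < E_K_diag K M \<pi> - E_K_indep K M \<pi>"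
proof -
  obtain k where k: "k \<in> {1..M}"
    using \<pi>(2) by fastforce
  have "0 < kernel_quad K {1..M} (\<lambda>i. of_bool (i = k) - \<pi> i)"
    using k \<pi> by (intro characteristic_kernel_quad_pos[OF K _ k]) (auto simp: sum_subtractf less_imp_neq)
  then have "0 < kernel_variance K {1..M} \<pi>"
    unfolding kernel_variance_def using k \<pi>(1) kernel_quad_nonneg[OF characteristic_kernel_is_kernel[OF K]]
    by (intro sum_pos2[of _ k]) (auto simp: less_imp_le)
  then show ?thesis
    unfolding kernel_variance_eq[OF finite_atLeastAtMost \<pi>(2)] E_K_diag_def E_K_indep_eq_kernel_quad .
qed

definition mutually_singular :: "nat \<Rightarrow> (nat \<Rightarrow> 'a measure) \<Rightarrow> 'a measure \<Rightarrow> bool" where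
  "mutually_singular M P Z \<longleftrightarrow> (\<exists>A :: nat \<Rightarrow> 'a set.
     (\<forall>i\<in>{1..M}. A i \<in> sets Z \<and> measure (P i) (A i) = 1) \<and> disjoint_family_on A {1..M})"

locale finite_mixture =
  fixes M :: nat and \<pi> :: "nat \<Rightarrow> real" and P :: "nat \<Rightarrow> 'a measure" and Z :: "'a measure"
  assumes weight_pos: "i \<in> {1..M} \<Longrightarrow> 0 < \<pi> i"
    and sum_weights: "(\<Sum>i=1..M. \<pi> i) = 1"
    and prob_space_component: "i \<in> {1..M} \<Longrightarrow> prob_space (P i)"
    and sets_component: "i \<in> {1..M} \<Longrightarrow> sets (P i) = sets Z"
begin

abbreviation \<mu> :: "'a measure" where "\<mu> \<equiv> mixture M \<pi> P Z"

abbreviation q :: "nat \<Rightarrow> 'a \<Rightarrow> real" where "q \<equiv> cond_label_prob M \<pi> P Z"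

lemma sets_mixture [measurable_cong, simp]: "sets \<mu> = sets Z"
  unfolding mixture_def by (simp add: sets.space_closed)

lemma space_mixture [simp]: "space \<mu> = space Z"
  unfolding mixture_def by (simp add: sets.space_closed)

lemma space_component: "i \<in> {1..M} \<Longrightarrow> space (P i) = space Z"
  using sets_component sets_eq_imp_space_eq by blast

lemma emeasure_mixture:
  assumes "A \<in> sets Z"
  shows "emeasure \<mu> A = (\<Sum>i=1..M. ennreal (\<pi> i) * emeasure (P i) A)"
  unfolding mixture_def
proof (rule emeasure_measure_of_sigma[OF sets.sigma_algebra_axioms _ _ assms])
  show "positive (sets Z) (\<lambda>A. \<Sum>i=1..M. ennreal (\<pi> i) * emeasure (P i) A)"
    by (simp add: positive_def)
  show "countably_additive (sets Z) (\<lambda>A. \<Sum>i=1..M. ennreal (\<pi> i) * emeasure (P i) A)"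
  proof (rule countably_additiveI)
    fix F :: "nat \<Rightarrow> 'a set"
    assume "range F \<subseteq> sets Z" "disjoint_family F"
    then have "(\<Sum>n. emeasure (P i) (F n)) = emeasure (P i) (\<Union>n. F n)" if "i \<in> {1..M}" for i
      using sets_component[OF that] by (intro suminf_emeasure) auto
    then show "(\<Sum>n. \<Sum>i=1..M. ennreal (\<pi> i) * emeasure (P i) (F n))
        = (\<Sum>i=1..M. ennreal (\<pi> i) * emeasure (P i) (\<Union>n. F n))"
      by (subst suminf_sum) (auto simp: ennreal_suminf_cmult)
  qed
qed

lemma sum_weights_ennreal: "(\<Sum>i=1..M. ennreal (\<pi> i)) = 1"
  using sum_weights weight_pos by (subst sum_ennreal) (auto intro: less_imp_le)

lemma prob_space_mixture: "prob_space \<mu>"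
proof
  have "emeasure \<mu> (space \<mu>) = (\<Sum>i=1..M. ennreal (\<pi> i) * emeasure (P i) (space (P i)))"
    by (simp add: emeasure_mixture space_component)
  also have "\<dots> = (\<Sum>i=1..M. ennreal (\<pi> i))"
    by (intro sum.cong) (simp_all add: prob_space.emeasure_space_1[OF prob_space_component])
  also have "\<dots> = 1"
    by (rule sum_weights_ennreal)
  finally show "emeasure \<mu> (space \<mu>) = 1" .
qed

sublocale \<mu>: prob_space \<mu>
  by (rule prob_space_mixture)

lemma absolutely_continuous_component:
  assumes i: "i \<in> {1..M}"
  shows "absolutely_continuous \<mu> (P i)"
  unfolding absolutely_continuous_def
proof
  fix A assume A: "A \<in> null_sets \<mu>"
  then have "(\<Sum>j=1..M. ennreal (\<pi> j) * emeasure (P j) A) = 0"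
    using emeasure_mixture[of A] by (simp add: null_sets_def)
  then have "ennreal (\<pi> i) * emeasure (P i) A = 0"
    using i by (simp only: sum_eq_0_iff[OF finite_atLeastAtMost])
  then show "A \<in> null_sets (P i)"
    using A weight_pos[OF i] sets_component[OF i] by (auto simp: null_sets_def)
qed

lemma cond_label_prob_nonneg: "i \<in> {1..M} \<Longrightarrow> 0 \<le> q i z"
  unfolding cond_label_prob_def by (simp add: weight_pos less_imp_le)

lemma measurable_cond_label_prob [measurable]: "q i \<in> borel_measurable \<mu>"
  unfolding cond_label_prob_def by measurable

lemma nn_integral_cond_label_prob:
  assumes i: "i \<in> {1..M}" and A: "A \<in> sets Z"
  shows "(\<integral>\<^sup>+z. ennreal (q i z) * indicator A z \<partial>\<mu>) = ennreal (\<pi> i) * emeasure (P i) A"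
proof -
  note ac = absolutely_continuous_component[OF i] sets_component[OF i, simplified sets_mixture[symmetric]]
  have "AE z in \<mu>. RN_deriv \<mu> (P i) z \<noteq> \<infinity>"
    using prob_space_component[OF i]
    by (intro \<mu>.RN_deriv_finite ac) (simp add: prob_space_imp_sigma_finite)
  then have "AE z in \<mu>. ennreal (q i z) * indicator A z
      = ennreal (\<pi> i) * (RN_deriv \<mu> (P i) z * indicator A z)"
    by eventually_elim
      (simp add: cond_label_prob_def ennreal_mult weight_pos[OF i] less_imp_le less_top mult.assoc)
  then have "(\<integral>\<^sup>+z. ennreal (q i z) * indicator A z \<partial>\<mu>)
      = ennreal (\<pi> i) * (\<integral>\<^sup>+z. RN_deriv \<mu> (P i) z * indicator A z \<partial>\<mu>)"
    using A by (simp add: nn_integral_cong_AE nn_integral_cmult)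
  also have "(\<integral>\<^sup>+z. RN_deriv \<mu> (P i) z * indicator A z \<partial>\<mu>) = emeasure (P i) A"
    using A by (simp add: emeasure_density[symmetric] \<mu>.density_RN_deriv[OF ac])
  finally show ?thesis .
qed

lemma AE_sum_cond_label_prob: "AE z in \<mu>. (\<Sum>i=1..M. q i z) = 1"
proof -
  have "AE z in \<mu>. (\<Sum>i=1..M. ennreal (q i z)) = 1"
  proof (rule \<mu>.density_unique_finite_measure)
    fix A assume "A \<in> sets \<mu>"
    then have A [measurable]: "A \<in> sets Z" by simp
    have "(\<integral>\<^sup>+z. (\<Sum>i=1..M. ennreal (q i z)) * indicator A z \<partial>\<mu>)
        = (\<Sum>i=1..M. \<integral>\<^sup>+z. ennreal (q i z) * indicator A z \<partial>\<mu>)"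
      unfolding sum_distrib_right using A by (intro nn_integral_sum) measurable
    also have "\<dots> = emeasure \<mu> A"
      using A by (simp add: nn_integral_cond_label_prob emeasure_mixture)
    finally show "(\<integral>\<^sup>+z. (\<Sum>i=1..M. ennreal (q i z)) * indicator A z \<partial>\<mu>)
        = (\<integral>\<^sup>+z. 1 * indicator A z \<partial>\<mu>)"
      using A by simp
  qed simp_all
  then show ?thesis
  proof eventually_elim
    case (elim z)
    moreover have "(\<Sum>i=1..M. ennreal (q i z)) = ennreal (\<Sum>i=1..M. q i z)"
      by (rule sum_ennreal) (rule cond_label_prob_nonneg)
    ultimately show ?case
      by (simp add: cond_label_prob_nonneg sum_nonneg)
  qed
qed

lemma AE_cond_label_prob_le_1:
  assumes i: "i \<in> {1..M}"
  shows "AE z in \<mu>. q i z \<le> 1"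
  using AE_sum_cond_label_prob
proof eventually_elim
  case (elim z)
  have "q i z \<le> (\<Sum>j=1..M. q j z)"
    using i by (intro member_le_sum) (auto simp: cond_label_prob_nonneg)
  with elim show ?case by simp
qed

lemma integral_cond_label_prob:
  assumes i: "i \<in> {1..M}"
  shows "integrable \<mu> (q i)" and "(\<integral>z. q i z \<partial>\<mu>) = \<pi> i"
proof -
  have "(\<integral>\<^sup>+z. ennreal (q i z) \<partial>\<mu>) = (\<integral>\<^sup>+z. ennreal (q i z) * indicator (space Z) z \<partial>\<mu>)"
    by (intro nn_integral_cong) simp
  also have "\<dots> = ennreal (\<pi> i) * emeasure (P i) (space (P i))"
    by (simp add: nn_integral_cond_label_prob[OF i] space_component[OF i])
  also have "\<dots> = ennreal (\<pi> i)"
    by (simp add: prob_space.emeasure_space_1[OF prob_space_component[OF i]])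
  finally have "(\<integral>\<^sup>+z. ennreal (q i z) \<partial>\<mu>) = ennreal (\<pi> i)" .
  then show "integrable \<mu> (q i)" and "(\<integral>z. q i z \<partial>\<mu>) = \<pi> i"
    using weight_pos[OF i] cond_label_prob_nonneg[OF i]
    by (auto intro!: integrableI_nonneg simp: integral_eq_nn_integral)
qed

lemma integral_sum_cond_label_prob:
  shows "integrable \<mu> (\<lambda>z. \<Sum>i=1..M. q i z * w i)"
    and "(\<integral>z. (\<Sum>i=1..M. q i z * w i) \<partial>\<mu>) = (\<Sum>i=1..M. \<pi> i * w i)"
  using integral_cond_label_prob by (auto intro!: sum.cong)

lemma integrable_cond_label_prob_mult:
  assumes "i \<in> {1..M}" "j \<in> {1..M}"
  shows "integrable \<mu> (\<lambda>z. q i z * q j z)"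
proof (rule \<mu>.integrable_const_bound[where B = 1])
  show "AE z in \<mu>. norm (q i z * q j z) \<le> 1"
    using AE_cond_label_prob_le_1[OF assms(1)] AE_cond_label_prob_le_1[OF assms(2)]
    by eventually_elim (use cond_label_prob_nonneg assms in \<open>simp add: abs_mult mult_le_one\<close>)
qed simp

lemma AE_cong_cond_label_prob:
  assumes "\<And>z. (\<Sum>i=1..M. q i z) = 1 \<Longrightarrow> R z \<longleftrightarrow> R' z"
  shows "(AE z in \<mu>. R z) \<longleftrightarrow> (AE z in \<mu>. R' z)"
proof
  assume "AE z in \<mu>. R z"
  with AE_sum_cond_label_prob show "AE z in \<mu>. R' z"
    by eventually_elim (use assms in blast)
next
  assume "AE z in \<mu>. R' z"
  with AE_sum_cond_label_prob show "AE z in \<mu>. R z"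
    by eventually_elim (use assms in blast)
qed

lemma AE_component_iff:
  assumes i: "i \<in> {1..M}" and A: "A \<in> sets Z"
  shows "(AE z in P i. z \<in> A) \<longleftrightarrow> (AE z in \<mu>. q i z \<noteq> 0 \<longrightarrow> z \<in> A)"
proof -
  have N [measurable]: "space Z - A \<in> sets Z"
    using A by blast
  have "(AE z in P i. z \<in> A) \<longleftrightarrow> emeasure (P i) (space Z - A) = 0"
    by (intro AE_iff_measurable) (auto simp: sets_component[OF i] space_component[OF i])
  also have "\<dots> \<longleftrightarrow> (\<integral>\<^sup>+z. ennreal (q i z) * indicator (space Z - A) z \<partial>\<mu>) = 0"
    using weight_pos[OF i] by (simp add: nn_integral_cond_label_prob[OF i N])
  also have "\<dots> \<longleftrightarrow> (AE z in \<mu>. ennreal (q i z) * indicator (space Z - A) z = 0)"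
    by (intro nn_integral_0_iff_AE) measurable
  also have "\<dots> \<longleftrightarrow> (AE z in \<mu>. q i z \<noteq> 0 \<longrightarrow> z \<in> A)"
    using cond_label_prob_nonneg[OF i] by (intro AE_cong) (auto simp: indicator_def)
  finally show ?thesis .
qed

lemma AE_cond_label_prob_eq_weight_iff:
  assumes i: "i \<in> {1..M}"
  shows "(AE z in \<mu>. q i z = \<pi> i) \<longleftrightarrow> P i = \<mu>"
proof
  assume q_eq: "AE z in \<mu>. q i z = \<pi> i"
  show "P i = \<mu>"
  proof (rule measure_eqI)
    show sets_eq: "sets (P i) = sets \<mu>"
      using sets_component[OF i] by simp
    fix A assume "A \<in> sets (P i)"
    then have A: "A \<in> sets Z"
      using sets_eq by simp
    have "ennreal (\<pi> i) * emeasure (P i) A = (\<integral>\<^sup>+z. ennreal (q i z) * indicator A z \<partial>\<mu>)"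
      by (rule nn_integral_cond_label_prob[OF i A, symmetric])
    also have "\<dots> = (\<integral>\<^sup>+z. ennreal (\<pi> i) * indicator A z \<partial>\<mu>)"
      using q_eq by (intro nn_integral_cong_AE) auto
    also have "\<dots> = ennreal (\<pi> i) * emeasure \<mu> A"
      using A by (simp add: nn_integral_cmult_indicator)
    finally show "emeasure (P i) A = emeasure \<mu> A"
      using weight_pos[OF i] by (simp add: ennreal_mult_cancel_left)
  qed
next
  assume P_eq: "P i = \<mu>"
  have "AE z in \<mu>. ennreal (q i z) = ennreal (\<pi> i)"
  proof (rule \<mu>.density_unique_finite_measure)
    fix A assume "A \<in> sets \<mu>"
    then have A: "A \<in> sets Z" by simp
    show "(\<integral>\<^sup>+z. ennreal (q i z) * indicator A z \<partial>\<mu>) = (\<integral>\<^sup>+z. ennreal (\<pi> i) * indicator A z \<partial>\<mu>)"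
      using A P_eq by (simp add: nn_integral_cond_label_prob[OF i A] nn_integral_cmult_indicator)
  qed simp_all
  then show "AE z in \<mu>. q i z = \<pi> i"
    by eventually_elim (use cond_label_prob_nonneg[OF i] weight_pos[OF i] in simp)
qed

lemma component_eq_mixture:
  assumes P_eq: "\<forall>i\<in>{1..M}. \<forall>j\<in>{1..M}. P i = P j" and i: "i \<in> {1..M}"
  shows "P i = \<mu>"
proof (rule sym, rule measure_eqI)
  show "sets \<mu> = sets (P i)"
    using sets_component[OF i] by simp
  have P_j: "P j = P i" if "j \<in> {1..M}" for j
    using P_eq i that by blast
  fix A assume "A \<in> sets \<mu>"
  then have "emeasure \<mu> A = (\<Sum>j=1..M. ennreal (\<pi> j) * emeasure (P i) A)"
    by (simp add: emeasure_mixture P_j)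
  also have "\<dots> = emeasure (P i) A"
    by (simp only: sum_distrib_right[symmetric] sum_weights_ennreal mult_1)
  finally show "emeasure \<mu> A = emeasure (P i) A" .
qed

lemma AE_cond_label_prob_eq_weights_iff:
  "(AE z in \<mu>. \<forall>i\<in>{1..M}. q i z = \<pi> i) \<longleftrightarrow> (\<forall>i\<in>{1..M}. \<forall>j\<in>{1..M}. P i = P j)"
proof -
  have "(AE z in \<mu>. \<forall>i\<in>{1..M}. q i z = \<pi> i) \<longleftrightarrow> (\<forall>i\<in>{1..M}. P i = \<mu>)"
    by (simp add: AE_ball_countable AE_cond_label_prob_eq_weight_iff)
  also have "\<dots> \<longleftrightarrow> (\<forall>i\<in>{1..M}. \<forall>j\<in>{1..M}. P i = P j)"
    using component_eq_mixture by (metis (full_types))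
  finally show ?thesis .
qed

lemma mutually_singular_if_AE_unit:
  assumes unit: "AE z in \<mu>. \<exists>k\<in>{1..M}. \<forall>i\<in>{1..M}. q i z = of_bool (i = k)"
  shows "mutually_singular M P Z"
proof -
  define A where "A k = {z \<in> space Z. \<forall>i\<in>{1..M}. q i z = of_bool (i = k)}" for k
  have A_sets [measurable]: "A k \<in> sets Z" for k
    unfolding A_def by measurable
  have "disjoint_family_on A {1..M}"
    unfolding disjoint_family_on_def A_def by auto
  moreover have "measure (P k) (A k) = 1" if k: "k \<in> {1..M}" for k
  proof -
    have "AE z in \<mu>. q k z \<noteq> 0 \<longrightarrow> z \<in> A k"
      using unit AE_space by eventually_elim (use k in \<open>auto simp: A_def\<close>)
    then have "AE z in P k. z \<in> A k"
      by (simp add: AE_component_iff[OF k A_sets])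
    then show ?thesis
      using sets_component[OF k] by (simp add: prob_space.AE_in_set_eq_1[OF prob_space_component[OF k]])
  qed
  ultimately show ?thesis
    unfolding mutually_singular_def using A_sets by blast
qed

lemma AE_unit_if_mutually_singular:
  assumes "mutually_singular M P Z"
  shows "AE z in \<mu>. \<exists>k\<in>{1..M}. \<forall>i\<in>{1..M}. q i z = of_bool (i = k)"
proof -
  obtain A where A: "\<And>i. i \<in> {1..M} \<Longrightarrow> A i \<in> sets Z \<and> measure (P i) (A i) = 1"
    and disj: "disjoint_family_on A {1..M}"
    using assms unfolding mutually_singular_def by blast
  have "AE z in \<mu>. q i z \<noteq> 0 \<longrightarrow> z \<in> A i" if i: "i \<in> {1..M}" for i
  proof -
    have "AE z in P i. z \<in> A i"
      using A[OF i] sets_component[OF i] by (simp add: prob_space.AE_in_set_eq_1[OF prob_space_component[OF i]])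
    then show ?thesis
      using A[OF i] by (simp add: AE_component_iff[OF i])
  qed
  then have "AE z in \<mu>. \<forall>i\<in>{1..M}. q i z \<noteq> 0 \<longrightarrow> z \<in> A i"
    by (simp add: AE_ball_countable)
  with AE_sum_cond_label_prob show ?thesis
  proof eventually_elim
    case (elim z)
    obtain k where k: "k \<in> {1..M}" "q k z \<noteq> 0"
      using elim(1) by (metis sum.neutral zero_neq_one)
    have others: "q i z = 0" if "i \<in> {1..M}" "i \<noteq> k" for i
      using elim(2) k that disj unfolding disjoint_family_on_def by blast
    have "(\<Sum>i=1..M. q i z) = q k z + (\<Sum>i\<in>{1..M} - {k}. q i z)"
      by (rule sum.remove[OF finite_atLeastAtMost k(1)])
    also have "(\<Sum>i\<in>{1..M} - {k}. q i z) = 0"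
      using others by (intro sum.neutral) blast
    finally have "q k z = 1"
      using elim(1) by simp
    with others k(1) show ?case
      by (intro bexI[of _ k]) auto
  qed
qed

lemma integral_kernel_form_cond_label_prob_left:
  shows "integrable \<mu> (\<lambda>z. kernel_form K {1..M} (\<lambda>i. q i z) b)"
    and "(\<integral>z. kernel_form K {1..M} (\<lambda>i. q i z) b \<partial>\<mu>) = kernel_form K {1..M} \<pi> b"
  unfolding kernel_form_sum_left by (rule integral_sum_cond_label_prob)+

lemma integral_kernel_form_cond_label_prob_right:
  shows "integrable \<mu> (\<lambda>z. kernel_form K {1..M} a (\<lambda>j. q j z))"
    and "(\<integral>z. kernel_form K {1..M} a (\<lambda>j. q j z) \<partial>\<mu>) = kernel_form K {1..M} a \<pi>"
  unfolding kernel_form_sum_right by (rule integral_sum_cond_label_prob)+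

lemma integrable_kernel_quad_cond_label_prob:
  "integrable \<mu> (\<lambda>z. kernel_quad K {1..M} (\<lambda>i. q i z))"
  unfolding kernel_form_def
  by (intro Bochner_Integration.integrable_sum integrable_mult_left integrable_cond_label_prob_mult)

lemma E_K_cond_eq_integral: "E_K_cond K M \<pi> P Z = (\<integral>z. kernel_quad K {1..M} (\<lambda>i. q i z) \<partial>\<mu>)"
  unfolding E_K_cond_def kernel_form_def by (simp add: ac_simps)

lemma E_K_cond_minus_indep:
  shows "integrable \<mu> (\<lambda>z. kernel_quad K {1..M} (\<lambda>i. q i z - \<pi> i))"
    and "E_K_cond K M \<pi> P Z - E_K_indep K M \<pi> = (\<integral>z. kernel_quad K {1..M} (\<lambda>i. q i z - \<pi> i) \<partial>\<mu>)"
proof -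
  have expand: "kernel_quad K {1..M} (\<lambda>i. q i z - \<pi> i) = kernel_quad K {1..M} (\<lambda>i. q i z)
      - kernel_form K {1..M} (\<lambda>i. q i z) \<pi> - kernel_form K {1..M} \<pi> (\<lambda>j. q j z)
      + kernel_quad K {1..M} \<pi>" for z
    by (simp add: kernel_form_diff_left kernel_form_diff_right)
  note integrals = integrable_kernel_quad_cond_label_prob
    integral_kernel_form_cond_label_prob_left[of K \<pi>] integral_kernel_form_cond_label_prob_right[of K \<pi>]
  show "integrable \<mu> (\<lambda>z. kernel_quad K {1..M} (\<lambda>i. q i z - \<pi> i))"
    unfolding expand using integrals by simp
  show "E_K_cond K M \<pi> P Z - E_K_indep K M \<pi> = (\<integral>z. kernel_quad K {1..M} (\<lambda>i. q i z - \<pi> i) \<partial>\<mu>)"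
    unfolding expand using integrals
    by (simp add: E_K_cond_eq_integral E_K_indep_eq_kernel_quad \<mu>.prob_space[unfolded space_mixture])
qed

lemma AE_kernel_variance_cond_label_prob:
  "AE z in \<mu>. kernel_variance K {1..M} (\<lambda>i. q i z)
    = (\<Sum>k=1..M. q k z * K k k) - kernel_quad K {1..M} (\<lambda>i. q i z)"
  using AE_sum_cond_label_prob by eventually_elim (simp add: kernel_variance_eq)

lemma E_K_diag_minus_cond:
  shows "integrable \<mu> (\<lambda>z. kernel_variance K {1..M} (\<lambda>i. q i z))"
    and "E_K_diag K M \<pi> - E_K_cond K M \<pi> P Z = (\<integral>z. kernel_variance K {1..M} (\<lambda>i. q i z) \<partial>\<mu>)"
proof -
  have diag: "integrable \<mu> (\<lambda>z. \<Sum>k=1..M. q k z * K k k)"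
    "(\<integral>z. (\<Sum>k=1..M. q k z * K k k) \<partial>\<mu>) = E_K_diag K M \<pi>"
    unfolding E_K_diag_def by (rule integral_sum_cond_label_prob)+
  have "integrable \<mu> (\<lambda>z. (\<Sum>k=1..M. q k z * K k k) - kernel_quad K {1..M} (\<lambda>i. q i z))"
    using diag(1) integrable_kernel_quad_cond_label_prob by simp
  then show "integrable \<mu> (\<lambda>z. kernel_variance K {1..M} (\<lambda>i. q i z))"
    by (rule integrable_cong_AE_imp[OF _ _ AE_symmetric[OF AE_kernel_variance_cond_label_prob]])
      measurable
  have "(\<integral>z. kernel_variance K {1..M} (\<lambda>i. q i z) \<partial>\<mu>)
      = (\<integral>z. (\<Sum>k=1..M. q k z * K k k) - kernel_quad K {1..M} (\<lambda>i. q i z) \<partial>\<mu>)"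
    by (rule integral_cong_AE[OF _ _ AE_kernel_variance_cond_label_prob]) measurable
  also have "\<dots> = E_K_diag K M \<pi> - E_K_cond K M \<pi> P Z"
    using diag integrable_kernel_quad_cond_label_prob by (simp add: E_K_cond_eq_integral)
  finally show "E_K_diag K M \<pi> - E_K_cond K M \<pi> P Z = (\<integral>z. kernel_variance K {1..M} (\<lambda>i. q i z) \<partial>\<mu>)"
    by simp
qed

lemma E_K_cond_minus_indep_nonneg: "is_kernel M K \<Longrightarrow> 0 \<le> E_K_cond K M \<pi> P Z - E_K_indep K M \<pi>"
  unfolding E_K_cond_minus_indep(2) by (intro Bochner_Integration.integral_nonneg kernel_quad_nonneg)

lemma E_K_cond_minus_indep_eq_0_iff:
  assumes K: "characteristic_kernel M K"
  shows "E_K_cond K M \<pi> P Z - E_K_indep K M \<pi> = 0 \<longleftrightarrow> (\<forall>i\<in>{1..M}. \<forall>j\<in>{1..M}. P i = P j)"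
proof -
  have "E_K_cond K M \<pi> P Z - E_K_indep K M \<pi> = 0
      \<longleftrightarrow> (AE z in \<mu>. kernel_quad K {1..M} (\<lambda>i. q i z - \<pi> i) = 0)"
    unfolding E_K_cond_minus_indep(2)
    by (intro integral_nonneg_eq_0_iff_AE E_K_cond_minus_indep(1) AE_I2
        kernel_quad_nonneg characteristic_kernel_is_kernel[OF K])
  also have "\<dots> \<longleftrightarrow> (AE z in \<mu>. \<forall>i\<in>{1..M}. q i z = \<pi> i)"
  proof (rule AE_cong_cond_label_prob)
    fix z assume "(\<Sum>i=1..M. q i z) = 1"
    then have "(\<Sum>i=1..M. q i z - \<pi> i) = 0"
      using sum_weights by (simp add: sum_subtractf)
    then show "kernel_quad K {1..M} (\<lambda>i. q i z - \<pi> i) = 0 \<longleftrightarrow> (\<forall>i\<in>{1..M}. q i z = \<pi> i)"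
      by (simp only: characteristic_kernel_quad_eq_0_iff[OF K] right_minus_eq)
  qed
  also have "\<dots> \<longleftrightarrow> (\<forall>i\<in>{1..M}. \<forall>j\<in>{1..M}. P i = P j)"
    by (rule AE_cond_label_prob_eq_weights_iff)
  finally show ?thesis .
qed

lemma E_K_diag_minus_cond_nonneg: "is_kernel M K \<Longrightarrow> 0 \<le> E_K_diag K M \<pi> - E_K_cond K M \<pi> P Z"
  unfolding E_K_diag_minus_cond(2)
  by (intro Bochner_Integration.integral_nonneg kernel_variance_nonneg ballI cond_label_prob_nonneg)

lemma E_K_diag_minus_cond_eq_0_iff:
  assumes K: "characteristic_kernel M K"
  shows "E_K_diag K M \<pi> - E_K_cond K M \<pi> P Z = 0 \<longleftrightarrow> mutually_singular M P Z"
proof -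
  have "E_K_diag K M \<pi> - E_K_cond K M \<pi> P Z = 0
      \<longleftrightarrow> (AE z in \<mu>. kernel_variance K {1..M} (\<lambda>i. q i z) = 0)"
    unfolding E_K_diag_minus_cond(2)
    by (intro integral_nonneg_eq_0_iff_AE E_K_diag_minus_cond(1) AE_I2 kernel_variance_nonneg
        ballI cond_label_prob_nonneg characteristic_kernel_is_kernel[OF K])
  also have "\<dots> \<longleftrightarrow> (AE z in \<mu>. \<exists>k\<in>{1..M}. \<forall>i\<in>{1..M}. q i z = of_bool (i = k))"
    using cond_label_prob_nonneg
    by (intro AE_cong_cond_label_prob characteristic_kernel_variance_eq_0_iff[OF K]) blast+
  also have "\<dots> \<longleftrightarrow> mutually_singular M P Z"
    using mutually_singular_if_AE_unit AE_unit_if_mutually_singular by blast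
  finally show ?thesis .
qed

end

theorem theorem1:
  fixes K :: "nat \<Rightarrow> nat \<Rightarrow> real" and M :: nat and \<pi> :: "nat \<Rightarrow> real"
    and P :: "nat \<Rightarrow> 'a measure" and Z :: "'a measure"
  assumes "M \<ge> 2"
    and "characteristic_kernel M K"
    and "\<forall>i\<in>{1..M}. 0 < \<pi> i \<and> \<pi> i < 1"
    and "(\<Sum>i=1..M. \<pi> i) = 1"
    and "\<forall>i\<in>{1..M}. prob_space (P i) \<and> sets (P i) = sets Z"
  shows "(0 \<le> KMD K M \<pi> P Z \<and> KMD K M \<pi> P Z \<le> 1)
    \<and> (KMD K M \<pi> P Z = 0 \<longleftrightarrow> (\<forall>i\<in>{1..M}. \<forall>j\<in>{1..M}. P i = P j))
    \<and> (KMD K M \<pi> P Z = 1 \<longleftrightarrow>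
           (\<exists>A :: nat \<Rightarrow> 'a set. (\<forall>i\<in>{1..M}. A i \<in> sets Z \<and> measure (P i) (A i) = 1)
                                  \<and> disjoint_family_on A {1..M}))"
proof -
  interpret finite_mixture M \<pi> P Z
    using assms(3-5) by (intro finite_mixture.intro) auto
  have K: "is_kernel M K"
    using assms(2) by (rule characteristic_kernel_is_kernel)
  have "0 < E_K_diag K M \<pi> - E_K_indep K M \<pi>"
    using assms(2-4) by (rule E_K_diag_minus_indep_pos)
  moreover have "0 \<le> E_K_cond K M \<pi> P Z - E_K_indep K M \<pi>"
    by (rule E_K_cond_minus_indep_nonneg[OF K])
  moreover have "0 \<le> E_K_diag K M \<pi> - E_K_cond K M \<pi> P Z"
    by (rule E_K_diag_minus_cond_nonneg[OF K])
  ultimately show ?thesis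
    unfolding KMD_def mutually_singular_def[symmetric]
      E_K_cond_minus_indep_eq_0_iff[OF assms(2), symmetric]
      E_K_diag_minus_cond_eq_0_iff[OF assms(2), symmetric]
    by (auto simp: field_simps)
qed

end
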